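(* Let $n$ be odd, let $\alpha$ satisfy $0<\alpha\le\frac{\sqrt n}{4e^2\sqrt{2\pi}}$, let $k\ge1$, and let $\ell_1,\ldots,\ell_k$ be distinct integers in $\{1,\ldots,\lfloor n/2\rfloor\}$. For $\xi\in[-\pi,\pi]$ define $$f(\xi)=\sum_{r\in\mathbb Z}e^{i\xi r}\prod_{j=1}^k\frac{\alpha\,bin(n,\tfrac12,r+\lfloor n/4\rfloor+\ell_j)}{1-\alpha\,bin(n,\tfrac12,r+\lfloor n/4\rfloor+\ell_j)}.$$ If $|\xi|\ge2$, then $|f(\xi)|\le 2e^{-\sqrt n}$.
   Context: $bin(n,p,k)=\binom nk p^k(1-p)^{n-k}$ for integers $0\le k\le n$, and $bin(n,p,k)=0$ if $k\notin\{0,\ldots,n\}$. *)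

theory Defs
  imports "HOL-Analysis.Analysis"
begin

definition bin :: "nat \<Rightarrow> real \<Rightarrow> int \<Rightarrow> real" where
  "bin n p k = (if 0 \<le> k \<and> k \<le> int n
      then real (n choose nat k) * p ^ nat k * (1 - p) ^ (n - nat k) else 0)"

end

theory Submission
  imports Defs
begin

text \<open>
  Expanding each factor \<open>x / (1 - x)\<close> into its geometric series writes the sum as a series,
  over exponent vectors \<open>\<pi>\<close> with entries \<open>\<ge> 1\<close>, of \<open>\<alpha> ^ M\<close> times the Fourier transform at
  \<open>\<xi>\<close> of a product of \<open>M = (\<Sum>j. \<pi> j)\<close> shifted copies of the mass function of
  \<open>Bin(n, 1/2)\<close>. Inverting all copies but one on the \<open>(2n+1)\<close>-th roots of unity turns this
  transform into an average of products \<open>\<Prod>t. ((1 + cis (\<phi> t)) / 2) ^ n\<close> over angles with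
  \<open>(\<Sum>t. \<phi> t) = \<xi>\<close>. Since \<open>2 \<le> \<bar>\<xi>\<bar> \<le> pi\<close>, the angles cannot all be close to multiples
  of \<open>2 pi\<close>, so \<open>n - 2p\<close> of the \<open>n\<close> powers yield a factor \<open>exp (- 19/48 (n - 2p) / M)\<close>, while
  by Parseval the other \<open>2p\<close> powers average to \<open>(2p choose p) / 4 ^ p \<approx> 1 / sqrt (pi p)\<close> per
  inverted copy. With \<open>p = n div 4\<close> and the bound on \<open>\<alpha>\<close>, the term of \<open>\<pi>\<close> is at most
  \<open>2 exp (- sqrt n) / 2 ^ M\<close>, and these bounds add up to \<open>2 exp (- sqrt n)\<close>.
\<close>

section \<open>Fourier analysis of the symmetric binomial distribution\<close>

lemma bin_half:
  "bin n (1/2) m = (if 0 \<le> m \<and> m \<le> int n then real (n choose nat m) / 2 ^ n else 0)"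
proof -
  have "(1/2::real) ^ nat m * (1/2) ^ (n - nat m) = 1 / 2 ^ n" if "0 \<le> m" "m \<le> int n"
  proof -
    have "nat m + (n - nat m) = n" using that by linarith
    then show ?thesis by (metis power_add power_one_over)
  qed
  then show ?thesis unfolding bin_def by (auto simp: mult.assoc)
qed

lemma bin_half_nonneg: "0 \<le> bin n (1/2) m"
  by (simp add: bin_half)

lemma bin_half_central: "bin (2 * p) (1/2) (int p) = real ((2 * p) choose p) / 4 ^ p"
  by (simp add: bin_half power_mult)

definition binomial_cf :: "nat \<Rightarrow> real \<Rightarrow> complex" where
  "binomial_cf n \<theta> = (\<Sum>u\<le>n. of_real (bin n (1/2) (int u)) * cis (real u * \<theta>))"

lemma binomial_cf_closed_form: "binomial_cf n \<theta> = ((1 + cis \<theta>) / 2) ^ n"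
proof -
  have "((1 + cis \<theta>) / 2) ^ n = (\<Sum>u\<le>n. of_nat (n choose u) * cis \<theta> ^ u) / 2 ^ n"
    using binomial_ring[of "cis \<theta>" 1 n] by (simp add: power_divide add.commute)
  also have "\<dots> = binomial_cf n \<theta>"
    unfolding binomial_cf_def sum_divide_distrib
    by (intro sum.cong refl) (simp add: bin_half Complex.DeMoivre)
  finally show ?thesis by simp
qed

lemma norm_one_plus_cis: "norm (1 + cis \<theta>) = 2 * \<bar>cos (\<theta> / 2)\<bar>"
proof -
  have "1 + cis \<theta> = cis (\<theta> / 2) * (cis (- (\<theta> / 2)) + cis (\<theta> / 2))"
    by (simp add: distrib_left cis_mult)
  also have "cis (- (\<theta> / 2)) + cis (\<theta> / 2) = of_real (2 * cos (\<theta> / 2))"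
    by (simp add: complex_eq_iff)
  finally show ?thesis by (simp add: norm_mult)
qed

lemma norm_binomial_cf: "norm (binomial_cf n \<theta>) = \<bar>cos (\<theta> / 2)\<bar> ^ n"
  by (simp add: binomial_cf_closed_form norm_power norm_divide norm_one_plus_cis)

lemma binomial_cf_minus: "binomial_cf n (- \<theta>) = cnj (binomial_cf n \<theta>)"
  by (simp add: binomial_cf_def cis_cnj)

lemma sum_cis_roots_of_unity:
  assumes "N > 0"
  shows "(\<Sum>j<N. cis (2 * pi * real j * of_int s / real N)) = (if int N dvd s then of_nat N else 0)"
proof -
  define z where "z = cis (2 * pi * of_int s / real N)"
  have powers: "cis (2 * pi * real j * of_int s / real N) = z ^ j" for j
    unfolding z_def Complex.DeMoivre by (simp add: field_simps)
  have root: "z ^ N = 1"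
    using assms cis_multiple_2pi[of "of_int s"] by (simp add: z_def Complex.DeMoivre)
  show ?thesis
  proof (cases "int N dvd s")
    case True
    then obtain q where "s = int N * q" by blast
    then have arg: "2 * pi * of_int s / real N = 2 * pi * of_int q" using assms by simp
    have "z = 1" unfolding z_def arg by (rule cis_multiple_2pi) simp
    then show ?thesis using True by (simp add: powers)
  next
    case False
    have "z \<noteq> 1"
    proof
      assume "z = 1"
      then have "cos (2 * pi * of_int s / real N) = 1" by (simp add: z_def complex_eq_iff)
      then obtain q :: int where "2 * pi * of_int s / real N = of_int q * 2 * pi"
        by (auto simp: cos_one_2pi_int)
      then have "of_int s = (of_int (int N * q) :: real)" using assms by (simp add: field_simps)
      with False show False by (metis dvd_triv_left of_int_eq_iff)
    qed
    then show ?thesis using False root by (simp add: powers geometric_sum)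
  qed
qed

definition root_angle :: "nat \<Rightarrow> nat \<Rightarrow> real" where
  "root_angle N j = 2 * pi * real j / real N"

lemma bin_fourier_inversion:
  assumes "int n - int N < m" "m < int N"
  shows "of_real (bin n (1/2) m) =
    (\<Sum>j<N. binomial_cf n (root_angle N j) * cis (- (of_int m * root_angle N j))) / of_nat N"
proof -
  have N: "N > 0" using assms by linarith
  have "(\<Sum>j<N. binomial_cf n (root_angle N j) * cis (- (of_int m * root_angle N j)))
      = (\<Sum>u\<le>n. of_real (bin n (1/2) (int u)) *
           (\<Sum>j<N. cis (2 * pi * real j * of_int (int u - m) / real N)))"
    unfolding binomial_cf_def sum_distrib_right sum_distrib_left
    by (subst sum.swap) (simp add: root_angle_def cis_mult mult.assoc algebra_simps diff_divide_distrib)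
  also have "\<dots> = (\<Sum>u\<le>n. if int u = m then of_real (bin n (1/2) m) * of_nat N else 0)"
  proof (intro sum.cong refl)
    fix u assume "u \<in> {..n}"
    then have "\<bar>int u - m\<bar> < int N" using assms by auto
    then have dvd: "int N dvd int u - m \<longleftrightarrow> int u = m"
      using dvd_imp_le_int[of "int u - m" "int N"] by auto
    then show "of_real (bin n (1/2) (int u)) * (\<Sum>j<N. cis (2 * pi * real j * of_int (int u - m) / real N))
        = (if int u = m then of_real (bin n (1/2) m) * of_nat N else 0)"
      unfolding sum_cis_roots_of_unity[OF N] dvd by simp
  qed
  also have "\<dots> = of_real (bin n (1/2) m) * of_nat N"
  proof (cases "0 \<le> m \<and> m \<le> int n")
    case True
    then have "{..n} \<inter> {u. int u = m} = {nat m}" by auto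
    then show ?thesis by (simp add: sum.If_cases)
  next
    case False
    then show ?thesis by (auto simp: bin_half intro!: sum.neutral)
  qed
  finally show ?thesis using N by simp
qed

lemma sum_bin_half_squared: "(\<Sum>v\<le>p. bin p (1/2) (int v) ^ 2) = bin (2 * p) (1/2) (int p)"
proof -
  have four: "((2::real) ^ p) ^ 2 = 4 ^ p"
    by (induction p) (simp_all add: power_mult_distrib)
  have "(\<Sum>v\<le>p. bin p (1/2) (int v) ^ 2) = (\<Sum>v\<le>p. real ((p choose v) ^ 2)) / 4 ^ p"
    unfolding sum_divide_distrib by (intro sum.cong refl) (simp add: bin_half power_divide four)
  also have "(\<Sum>v\<le>p. real ((p choose v) ^ 2)) = real ((2 * p) choose p)"
    by (simp only: of_nat_sum [symmetric] choose_square_sum)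
  finally show ?thesis by (simp add: bin_half_central)
qed

lemma sum_abs_cos_power_roots:
  assumes "p < N"
  shows "(\<Sum>j<N. \<bar>cos (root_angle N j / 2)\<bar> ^ (2 * p)) = real N * bin (2 * p) (1/2) (int p)"
proof -
  let ?\<phi> = "\<lambda>j. binomial_cf p (root_angle N j)"
  have "of_real (bin (2 * p) (1/2) (int p))
      = (\<Sum>v\<le>p. of_real (bin p (1/2) (int v)) * of_real (bin p (1/2) (int v)) :: complex)"
    by (simp flip: sum_bin_half_squared add: power2_eq_square)
  also have "\<dots> = (\<Sum>v\<le>p. of_real (bin p (1/2) (int v)) *
      ((\<Sum>j<N. ?\<phi> j * cis (- (of_int (int v) * root_angle N j))) / of_nat N))"
    using assms by (intro sum.cong refl arg_cong2[where f = "(*)"] bin_fourier_inversion) auto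
  also have "\<dots> = (\<Sum>j<N. ?\<phi> j * binomial_cf p (- root_angle N j)) / of_nat N"
    unfolding binomial_cf_def sum_divide_distrib sum_distrib_left sum_distrib_right
    by (subst sum.swap) (simp add: algebra_simps)
  also have "\<dots> = of_real (\<Sum>j<N. \<bar>cos (root_angle N j / 2)\<bar> ^ (2 * p)) / of_nat N"
  proof -
    have "?\<phi> j * binomial_cf p (- root_angle N j) = of_real (\<bar>cos (root_angle N j / 2)\<bar> ^ (2 * p))" for j
    proof -
      have "?\<phi> j * binomial_cf p (- root_angle N j) = of_real (norm (?\<phi> j) ^ 2)"
        by (simp only: binomial_cf_minus complex_norm_square)
      also have "norm (?\<phi> j) ^ 2 = \<bar>cos (root_angle N j / 2)\<bar> ^ (2 * p)"
        by (simp only: norm_binomial_cf power_even_eq)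
      finally show ?thesis .
    qed
    then show ?thesis unfolding of_real_sum by (simp only:)
  qed
  finally have "(of_real (bin (2 * p) (1/2) (int p)) :: complex)
      = of_real ((\<Sum>j<N. \<bar>cos (root_angle N j / 2)\<bar> ^ (2 * p)) / real N)"
    by simp
  then have "bin (2 * p) (1/2) (int p) = (\<Sum>j<N. \<bar>cos (root_angle N j / 2)\<bar> ^ (2 * p)) / real N"
    by (simp only: of_real_eq_iff)
  then show ?thesis using assms by (simp add: field_simps)
qed

lemma sum_PiE_prod_abs_cos_power_roots:
  assumes "finite S" "p < N"
  shows "(\<Sum>J\<in>PiE S (\<lambda>_. {..<N}). \<Prod>t\<in>S. \<bar>cos (root_angle N (J t) / 2)\<bar> ^ (2 * p))
    = (real N * bin (2 * p) (1/2) (int p)) ^ card S"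
  using prod_sum_PiE[OF assms(1), of "\<lambda>_. {..<N}" "\<lambda>_ j. \<bar>cos (root_angle N j / 2)\<bar> ^ (2 * p)"]
    sum_abs_cos_power_roots[OF assms(2)] by simp

lemma binomial_central_Suc: "Suc p * ((2 * Suc p) choose Suc p) = 2 * (2 * p + 1) * ((2 * p) choose p)"
proof -
  have "Suc p * ((2 * Suc p) choose Suc p) = 2 * (Suc p * (Suc (2 * p) choose Suc p))"
    using Suc_times_binomial[of p "Suc (2 * p)"] central_binomial_odd[of "Suc (2 * p)"] by simp
  also have "Suc p * (Suc (2 * p) choose Suc p) = (2 * p + 1) * ((2 * p) choose p)"
    using Suc_times_binomial[of p "2 * p"] by simp
  finally show ?thesis by simp
qed

lemma bin_central_Suc:
  "(2 * real p + 2) * bin (2 * Suc p) (1/2) (int (Suc p)) = (2 * real p + 1) * bin (2 * p) (1/2) (int p)"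
proof -
  have "(2 * real p + 2) * bin (2 * Suc p) (1/2) (int (Suc p))
      = 2 * (real (Suc p) * real ((2 * Suc p) choose Suc p)) / 4 ^ Suc p"
    unfolding bin_half_central by (simp add: field_simps)
  also have "\<dots> = 2 * real (2 * (2 * p + 1) * ((2 * p) choose p)) / 4 ^ Suc p"
    by (simp only: of_nat_mult [symmetric] binomial_central_Suc)
  also have "\<dots> = (2 * real p + 1) * bin (2 * p) (1/2) (int p)"
    unfolding bin_half_central by (simp add: field_simps)
  finally show ?thesis .
qed

lemma bin_central_sq_le: "bin (2 * p) (1/2) (int p) ^ 2 * (2 * real p + 1) \<le> 1"
proof (induction p)
  case 0
  then show ?case by (simp add: bin_half)
next
  case (Suc p)
  define c where "c = bin (2 * p) (1/2) (int p)"
  define c' where "c' = bin (2 * Suc p) (1/2) (int (Suc p))"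
  have "c' ^ 2 * (2 * real (Suc p) + 1) * (2 * real p + 2) ^ 2
      = ((2 * real p + 2) * c') ^ 2 * (2 * real p + 3)"
    unfolding power_mult_distrib by (simp add: algebra_simps)
  also have "\<dots> = (c ^ 2 * (2 * real p + 1)) * ((2 * real p + 1) * (2 * real p + 3))"
    unfolding c'_def bin_central_Suc c_def by (simp add: power_mult_distrib power2_eq_square)
  also have "\<dots> \<le> 1 * (2 * real p + 2) ^ 2"
  proof (rule mult_mono)
    show "c ^ 2 * (2 * real p + 1) \<le> 1" using Suc.IH by (simp add: c_def)
    show "(2 * real p + 1) * (2 * real p + 3) \<le> (2 * real p + 2) ^ 2"
      by (simp add: power2_eq_square algebra_simps)
  qed simp_all
  finally show ?case unfolding c'_def by (subst (asm) mult_le_cancel_right_pos) auto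
qed

lemma bin_half_odd_le_central: "bin (2 * q + 1) (1/2) m \<le> bin (2 * q) (1/2) (int q)"
proof -
  have "(2 * q + 1) choose nat m \<le> ((2 * q + 1) choose Suc q)"
    using binomial_maximum[of "2 * q + 1" "nat m"] central_binomial_odd[of "2 * q + 1"] by simp
  also have "(2 * q + 1) choose Suc q \<le> 2 * ((2 * q) choose q)"
    using binomial_maximum'[of q "Suc q"] by simp
  finally have choose_le: "real ((2 * q + 1) choose nat m) \<le> real (2 * ((2 * q) choose q))"
    by (simp only: of_nat_le_iff)
  have "bin (2 * q + 1) (1/2) m \<le> real ((2 * q + 1) choose nat m) / 2 ^ (2 * q + 1)"
    by (simp add: bin_half)
  also have "\<dots> \<le> real (2 * ((2 * q) choose q)) / 2 ^ (2 * q + 1)"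
    using choose_le by (rule divide_right_mono) simp
  also have "\<dots> = bin (2 * q) (1/2) (int q)"
    by (simp add: bin_half_central power_mult)
  finally show ?thesis .
qed

lemma bin_central_mult_sqrt_le:
  fixes c :: real
  assumes "real n \<le> c ^ 2 * (2 * real p + 1)" "0 \<le> c"
  shows "bin (2 * p) (1/2) (int p) * sqrt n \<le> c"
proof -
  have "(bin (2 * p) (1/2) (int p) * sqrt n) ^ 2 = bin (2 * p) (1/2) (int p) ^ 2 * real n"
    by (simp add: power_mult_distrib)
  also have "\<dots> \<le> bin (2 * p) (1/2) (int p) ^ 2 * (c ^ 2 * (2 * real p + 1))"
    using assms(1) by (rule mult_left_mono) simp
  also have "\<dots> = c ^ 2 * (bin (2 * p) (1/2) (int p) ^ 2 * (2 * real p + 1))"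
    by (simp only: ac_simps)
  also have "\<dots> \<le> c ^ 2"
    using bin_central_sq_le[of p] by (rule mult_left_le) simp
  finally show ?thesis
    using assms(2) by (rule power2_le_imp_le)
qed

section \<open>Products of cosines of angles with a prescribed sum\<close>

lemma cos_le_taylor4: "cos (y::real) \<le> 1 - y ^ 2 / 2 + y ^ 4 / 24"
proof -
  obtain t where "cos y = (\<Sum>m<4. cos_coeff m * y ^ m) + cos (t + 1/2 * real 4 * pi) / fact 4 * y ^ 4"
    using Maclaurin_cos_expansion[of y 4] by blast
  also have "(\<Sum>m<4. cos_coeff m * y ^ m) = 1 - y ^ 2 / 2"
  proof -
    have "{..<4::nat} = {0, 1, 2, 3}" by auto
    then show ?thesis by (simp add: cos_coeff_def)
  qed
  also have "cos (t + 1/2 * real 4 * pi) = cos t"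
    by (simp add: cos_add)
  also have "cos t / fact 4 * y ^ 4 \<le> 1 / fact 4 * y ^ 4"
    by (intro mult_right_mono divide_right_mono) (auto simp: zero_le_even_power)
  finally show ?thesis by (simp add: fact_numeral)
qed

lemma abs_cos_le_exp_neg_sq:
  assumes "\<bar>y\<bar> \<le> pi / 2"
  shows "\<bar>cos y\<bar> \<le> exp (- (19/48) * y ^ 2)"
proof -
  have "pi \<le> 3.15"
    using pi_approx by (simp add: abs_le_iff)
  have "y ^ 2 \<le> (pi / 2) ^ 2"
    using power_mono[OF assms abs_ge_zero, of 2] by simp
  also have "\<dots> \<le> (3.15 / 2) ^ 2"
    using \<open>pi \<le> 3.15\<close> by (intro power_mono) auto
  also have "\<dots> \<le> 10 / 4" by (simp add: power2_eq_square)
  finally have "y ^ 2 * y ^ 2 \<le> y ^ 2 * (10 / 4)"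
    by (intro mult_left_mono) auto
  then have "y ^ 4 \<le> y ^ 2 * (10 / 4)"
    by (simp flip: power_add)
  \<comment> \<open>so the quartic Taylor term costs at most \<open>5/48 y\<^sup>2\<close>, and \<open>19/48 = 1/2 - 5/48\<close>\<close>
  have "\<bar>cos y\<bar> = cos y"
    using assms by (simp add: cos_ge_zero)
  also have "\<dots> \<le> 1 - y ^ 2 / 2 + y ^ 4 / 24" by (rule cos_le_taylor4)
  also have "\<dots> \<le> 1 + (- (19/48) * y ^ 2)" using \<open>y ^ 4 \<le> _\<close> by simp
  also have "\<dots> \<le> exp (- (19/48) * y ^ 2)" by (rule exp_ge_add_one_self)
  finally show ?thesis .
qed

lemma abs_cos_add_int_pi: "\<bar>cos (x + of_int k * pi)\<bar> = \<bar>cos x\<bar>"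
proof -
  have sin: "sin (of_int k * pi) = 0"
    by (simp add: mult.commute)
  then have "\<bar>cos (of_int k * pi)\<bar> = 1"
    using sin_cos_squared_add[of "of_int k * pi"] by (simp add: abs_square_eq_1)
  then show ?thesis by (simp add: cos_add sin abs_mult)
qed

lemma prod_abs_cos_half_le:
  fixes T :: "'a set" and \<phi> :: "'a \<Rightarrow> real"
  assumes T: "finite T" "T \<noteq> {}" and sum: "(\<Sum>t\<in>T. \<phi> t) = \<xi>"
    and \<xi>: "2 \<le> \<bar>\<xi>\<bar>" "\<bar>\<xi>\<bar> \<le> pi"
  shows "(\<Prod>t\<in>T. \<bar>cos (\<phi> t / 2)\<bar>) \<le> exp (- (19/48) / real (card T))"
proof -
  \<comment> \<open>Reduce the half-angles modulo \<open>\<pi>\<close> into \<open>[-\<pi>/2, \<pi>/2]\<close>; their sum is \<open>\<xi>/2\<close> modulo \<open>\<pi>\<close>,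
     hence at least 1 in absolute value, and Cauchy-Schwarz spreads this over the \<open>|T|\<close> angles.\<close>
  define k where "k t = round (\<phi> t / (2 * pi))" for t
  define d where "d t = \<phi> t / 2 - of_int (k t) * pi" for t
  have d_le: "\<bar>d t\<bar> \<le> pi / 2" for t
  proof -
    have "\<bar>of_int (k t) - \<phi> t / (2 * pi)\<bar> \<le> 1 / 2"
      unfolding k_def by (rule of_int_round_abs_le)
    then have "pi * \<bar>of_int (k t) - \<phi> t / (2 * pi)\<bar> \<le> pi / 2"
      using pi_gt_zero by (simp add: mult_left_mono)
    moreover have "d t = - (pi * (of_int (k t) - \<phi> t / (2 * pi)))"
      by (simp add: d_def field_simps)
    ultimately show ?thesis by (simp add: abs_mult)
  qed
  define K where "K = (\<Sum>t\<in>T. k t)"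
  have "(\<Sum>t\<in>T. d t) = \<xi> / 2 - of_int K * pi"
    using sum by (simp add: d_def K_def sum_subtractf sum_divide_distrib sum_distrib_right)
  moreover have "2 \<le> \<bar>\<xi> - 2 * pi * of_int K\<bar>"
  proof (cases "K = 0")
    case False
    then have "2 * pi \<le> \<bar>2 * pi * of_int K\<bar>"
      by (simp add: abs_mult)
    then show ?thesis using \<xi> pi_gt3 by linarith
  qed (use \<xi> in simp)
  ultimately have "1 \<le> \<bar>\<Sum>t\<in>T. d t\<bar>" by (simp add: field_simps)
  then have "1 \<le> (\<Sum>t\<in>T. d t) ^ 2" using power_mono[of 1 _ 2] by fastforce
  also have "\<dots> \<le> (\<Sum>t\<in>T. d t ^ 2) * real (card T)" by (rule sum_squared_le_sum_of_squares)
  finally have sum_sq: "1 / real (card T) \<le> (\<Sum>t\<in>T. d t ^ 2)"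
    using T by (simp add: divide_le_eq card_gt_0_iff)
  have "(\<Prod>t\<in>T. \<bar>cos (\<phi> t / 2)\<bar>) = (\<Prod>t\<in>T. \<bar>cos (d t)\<bar>)"
  proof (rule prod.cong)
    show "\<bar>cos (\<phi> t / 2)\<bar> = \<bar>cos (d t)\<bar>" for t
      using abs_cos_add_int_pi[of "d t" "k t"] by (simp add: d_def)
  qed simp
  also have "\<dots> \<le> (\<Prod>t\<in>T. exp (- (19/48) * d t ^ 2))"
    by (intro prod_mono conjI abs_cos_le_exp_neg_sq d_le abs_ge_zero)
  also have "\<dots> = exp (- (19/48) * (\<Sum>t\<in>T. d t ^ 2))"
    using T by (simp add: exp_sum sum_distrib_left)
  also have "\<dots> \<le> exp (- (19/48) / real (card T))"
    using sum_sq by simp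
  finally show ?thesis .
qed

lemma prod_abs_cos_power_le:
  fixes T :: "'a set" and \<phi> :: "'a \<Rightarrow> real"
  assumes T: "finite T" "t0 \<in> T" and sum: "(\<Sum>t\<in>T. \<phi> t) = \<xi>"
    and \<xi>: "2 \<le> \<bar>\<xi>\<bar>" "\<bar>\<xi>\<bar> \<le> pi" and "m \<le> n"
  shows "(\<Prod>t\<in>T. \<bar>cos (\<phi> t / 2)\<bar> ^ n)
    \<le> exp (- (19/48) * real (n - m) / real (card T)) * (\<Prod>t\<in>T - {t0}. \<bar>cos (\<phi> t / 2)\<bar> ^ m)"
proof -
  define c where "c t = \<bar>cos (\<phi> t / 2)\<bar>" for t
  have c: "0 \<le> c t" "c t \<le> 1" for t by (simp_all add: c_def)
  have "(\<Prod>t\<in>T. c t ^ n) = (\<Prod>t\<in>T. c t) ^ (n - m) * (\<Prod>t\<in>T. c t ^ m)"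
    using \<open>m \<le> n\<close> by (simp add: prod_power_distrib flip: prod.distrib power_add)
  also have "\<dots> \<le> exp (- (19/48) / real (card T)) ^ (n - m) * (\<Prod>t\<in>T - {t0}. c t ^ m)"
  proof (rule mult_mono)
    show "(\<Prod>t\<in>T. c t) ^ (n - m) \<le> exp (- (19/48) / real (card T)) ^ (n - m)"
      using prod_abs_cos_half_le[OF T(1) _ sum \<xi>] T c by (auto simp: c_def intro!: power_mono prod_nonneg)
    have "(\<Prod>t\<in>T. c t ^ m) = c t0 ^ m * (\<Prod>t\<in>T - {t0}. c t ^ m)"
      using T by (simp add: prod.remove)
    also have "\<dots> \<le> (\<Prod>t\<in>T - {t0}. c t ^ m)"
      using c by (simp add: mult_left_le_one_le power_le_one prod_nonneg)
    finally show "(\<Prod>t\<in>T. c t ^ m) \<le> (\<Prod>t\<in>T - {t0}. c t ^ m)" .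
  qed (use c in \<open>simp_all add: prod_nonneg\<close>)
  also have "exp (- (19/48) / real (card T)) ^ (n - m) = exp (- (19/48) * real (n - m) / real (card T))"
    by (simp flip: exp_of_nat_mult)
  finally show ?thesis by (simp add: c_def)
qed

section \<open>Twisted sums of products of shifted binomial masses\<close>

lemma prod_cis: "finite A \<Longrightarrow> (\<Prod>x\<in>A. cis (f x)) = cis (\<Sum>x\<in>A. f x)"
  by (induction A rule: finite_induct) (simp_all add: cis_mult)

lemma sum_bin_shift_cis:
  "(\<Sum>r\<in>{- c..int n - c}. of_real (bin n (1/2) (r + c)) * cis (of_int r * \<psi>))
     = cis (- (of_int c * \<psi>)) * binomial_cf n \<psi>"
proof -
  have "(\<Sum>r\<in>{- c..int n - c}. of_real (bin n (1/2) (r + c)) * cis (of_int r * \<psi>))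
      = (\<Sum>u\<le>n. of_real (bin n (1/2) (int u)) * cis ((real u - of_int c) * \<psi>))"
    by (rule sum.reindex_bij_witness[where j = "\<lambda>r. nat (r + c)" and i = "\<lambda>u. int u - c"]) auto
  also have "\<dots> = cis (- (of_int c * \<psi>)) * binomial_cf n \<psi>"
    unfolding binomial_cf_def sum_distrib_left
    by (intro sum.cong refl) (simp add: cis_mult algebra_simps)
  finally show ?thesis .
qed

lemma prod_bin_fourier:
  assumes "finite S" and range: "\<And>t. t \<in> S \<Longrightarrow> int n - int N < r + a t \<and> r + a t < int N"
  shows "of_real (\<Prod>t\<in>S. bin n (1/2) (r + a t)) =
    (\<Sum>J\<in>PiE S (\<lambda>_. {..<N}).
       (\<Prod>t\<in>S. binomial_cf n (root_angle N (J t)) * cis (- (of_int (a t) * root_angle N (J t)))) *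
       cis (- (of_int r * (\<Sum>t\<in>S. root_angle N (J t))))) / of_nat N ^ card S"
    (is "_ = ?rhs")
proof -
  let ?z = "\<lambda>t j. binomial_cf n (root_angle N j) * cis (- (of_int (r + a t) * root_angle N j))"
  have split: "?z t j = binomial_cf n (root_angle N j) * cis (- (of_int (a t) * root_angle N j)) *
      cis (- (of_int r * root_angle N j))" for t j
    by (simp add: cis_mult algebra_simps)
  have cis_sum: "(\<Prod>t\<in>S. cis (- (of_int r * root_angle N (J t))))
      = cis (- (of_int r * (\<Sum>t\<in>S. root_angle N (J t))))" for J
    using \<open>finite S\<close> by (simp add: prod_cis sum_negf sum_distrib_left)
  have "of_real (\<Prod>t\<in>S. bin n (1/2) (r + a t)) = (\<Prod>t\<in>S. (\<Sum>j<N. ?z t j) / of_nat N)"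
    unfolding of_real_prod using range by (intro prod.cong refl bin_fourier_inversion) auto
  also have "\<dots> = (\<Sum>J\<in>PiE S (\<lambda>_. {..<N}). \<Prod>t\<in>S. ?z t (J t)) / of_nat N ^ card S"
    using \<open>finite S\<close> by (simp add: prod_dividef prod_sum_PiE)
  also have "\<dots> = ?rhs"
    by (simp only: split prod.distrib cis_sum)
  finally show ?thesis .
qed

lemma twisted_sum_prod_bin_eq:
  fixes T :: "'a set" and a :: "'a \<Rightarrow> int" and N :: nat and \<xi> :: real
  assumes T: "finite T" "t0 \<in> T" and range: "\<And>t. t \<in> T \<Longrightarrow> \<bar>a t - a t0\<bar> + int n < int N"
  defines "T' \<equiv> T - {t0}"
  defines "\<psi> \<equiv> \<lambda>J. \<xi> - (\<Sum>t\<in>T'. root_angle N (J t))"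
  shows "(\<Sum>r\<in>{- a t0..int n - a t0}. cis (\<xi> * of_int r) * of_real (\<Prod>t\<in>T. bin n (1/2) (r + a t)))
    = (\<Sum>J\<in>PiE T' (\<lambda>_. {..<N}).
         (\<Prod>t\<in>T'. binomial_cf n (root_angle N (J t)) * cis (- (of_int (a t) * root_angle N (J t)))) *
         (cis (- (of_int (a t0) * \<psi> J)) * binomial_cf n (\<psi> J))) / of_nat N ^ card T'"
proof -
  define P where
    "P J = (\<Prod>t\<in>T'. binomial_cf n (root_angle N (J t)) * cis (- (of_int (a t) * root_angle N (J t))))"
    for J
  let ?R = "{- a t0..int n - a t0}" and ?J = "PiE T' (\<lambda>_. {..<N})"
  have "finite T'" using T by (simp add: T'_def)
  have summand: "cis (\<xi> * of_int r) * of_real (\<Prod>t\<in>T. bin n (1/2) (r + a t))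
      = (\<Sum>J\<in>?J. P J * (of_real (bin n (1/2) (r + a t0)) * cis (of_int r * \<psi> J))) / of_nat N ^ card T'"
    if r: "r \<in> ?R" for r
  proof -
    have fourier: "of_real (\<Prod>t\<in>T'. bin n (1/2) (r + a t)) =
        (\<Sum>J\<in>?J. P J * cis (- (of_int r * (\<Sum>t\<in>T'. root_angle N (J t))))) / of_nat N ^ card T'"
      unfolding P_def
    proof (rule prod_bin_fourier[OF \<open>finite T'\<close>])
      fix t assume "t \<in> T'"
      then have "\<bar>a t - a t0\<bar> + int n < int N" using range by (simp add: T'_def)
      then show "int n - int N < r + a t \<and> r + a t < int N" using r by auto
    qed
    have twist: "cis (\<xi> * of_int r) * cis (- (of_int r * (\<Sum>t\<in>T'. root_angle N (J t))))
        = cis (of_int r * \<psi> J)" for J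
      by (simp add: \<psi>_def cis_mult algebra_simps)
    have "cis (\<xi> * of_int r) * of_real (\<Prod>t\<in>T. bin n (1/2) (r + a t))
        = of_real (bin n (1/2) (r + a t0)) * (cis (\<xi> * of_int r) * of_real (\<Prod>t\<in>T'. bin n (1/2) (r + a t)))"
      using T by (simp add: T'_def prod.remove)
    also have "\<dots> = (\<Sum>J\<in>?J. P J * (of_real (bin n (1/2) (r + a t0)) *
        (cis (\<xi> * of_int r) * cis (- (of_int r * (\<Sum>t\<in>T'. root_angle N (J t))))))) / of_nat N ^ card T'"
      unfolding fourier by (simp add: sum_distrib_left sum_divide_distrib mult_ac)
    finally show ?thesis by (simp only: twist)
  qed
  have "(\<Sum>r\<in>?R. cis (\<xi> * of_int r) * of_real (\<Prod>t\<in>T. bin n (1/2) (r + a t)))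
      = (\<Sum>r\<in>?R. (\<Sum>J\<in>?J. P J * (of_real (bin n (1/2) (r + a t0)) * cis (of_int r * \<psi> J)))
          / of_nat N ^ card T')"
    by (rule sum.cong[OF refl summand])
  also have "\<dots> = (\<Sum>J\<in>?J. P J * (\<Sum>r\<in>?R. of_real (bin n (1/2) (r + a t0)) * cis (of_int r * \<psi> J)))
      / of_nat N ^ card T'"
    unfolding sum_divide_distrib [symmetric] sum_distrib_left by (subst sum.swap) simp
  also have "\<dots> = (\<Sum>J\<in>?J. P J * (cis (- (of_int (a t0) * \<psi> J)) * binomial_cf n (\<psi> J))) / of_nat N ^ card T'"
    by (simp only: sum_bin_shift_cis)
  finally show ?thesis unfolding P_def .
qed

lemma norm_binomial_cf_prod_le:
  fixes T :: "'a set" and \<theta> :: "'a \<Rightarrow> real"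
  assumes T: "finite T" "t0 \<in> T" and \<xi>: "2 \<le> \<bar>\<xi>\<bar>" "\<bar>\<xi>\<bar> \<le> pi" and "m \<le> n"
  shows "norm (binomial_cf n (\<xi> - (\<Sum>t\<in>T - {t0}. \<theta> t)) * (\<Prod>t\<in>T - {t0}. binomial_cf n (\<theta> t)))
    \<le> exp (- (19/48) * real (n - m) / real (card T)) * (\<Prod>t\<in>T - {t0}. \<bar>cos (\<theta> t / 2)\<bar> ^ m)"
proof -
  define \<phi> where "\<phi> t = (if t = t0 then \<xi> - (\<Sum>t\<in>T - {t0}. \<theta> t) else \<theta> t)" for t
  have on_rest: "(\<Sum>t\<in>T - {t0}. \<phi> t) = (\<Sum>t\<in>T - {t0}. \<theta> t)"
    "(\<Prod>t\<in>T - {t0}. \<bar>cos (\<phi> t / 2)\<bar> ^ k) = (\<Prod>t\<in>T - {t0}. \<bar>cos (\<theta> t / 2)\<bar> ^ k)" for k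
    by (auto simp: \<phi>_def intro!: sum.cong prod.cong)
  have "(\<Sum>t\<in>T. \<phi> t) = \<xi>"
    using T by (simp add: sum.remove on_rest) (simp add: \<phi>_def)
  have "norm (binomial_cf n (\<xi> - (\<Sum>t\<in>T - {t0}. \<theta> t)) * (\<Prod>t\<in>T - {t0}. binomial_cf n (\<theta> t)))
      = (\<Prod>t\<in>T. \<bar>cos (\<phi> t / 2)\<bar> ^ n)"
    using T by (simp add: prod.remove on_rest norm_mult prod_norm [symmetric] norm_binomial_cf)
      (simp add: \<phi>_def)
  also have "\<dots> \<le> exp (- (19/48) * real (n - m) / real (card T)) * (\<Prod>t\<in>T - {t0}. \<bar>cos (\<phi> t / 2)\<bar> ^ m)"
    using prod_abs_cos_power_le[OF T \<open>(\<Sum>t\<in>T. \<phi> t) = \<xi>\<close> \<xi> \<open>m \<le> n\<close>] .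
  finally show ?thesis by (simp only: on_rest)
qed

lemma norm_twisted_sum_prod_bin_le:
  fixes T :: "'a set" and a :: "'a \<Rightarrow> int"
  assumes T: "finite T" "t0 \<in> T" and shifts: "\<And>t. t \<in> T \<Longrightarrow> \<bar>a t - a t0\<bar> \<le> int n"
    and \<xi>: "2 \<le> \<bar>\<xi>\<bar>" "\<bar>\<xi>\<bar> \<le> pi" and "2 * p \<le> n"
  shows "norm (\<Sum>r\<in>{- a t0..int n - a t0}. cis (\<xi> * of_int r) * of_real (\<Prod>t\<in>T. bin n (1/2) (r + a t)))
    \<le> exp (- (19/48) * real (n - 2 * p) / real (card T)) * bin (2 * p) (1/2) (int p) ^ (card T - 1)"
proof -
  \<comment> \<open>\<open>2n + 1\<close> roots of unity invert each shifted factor on the support of the \<open>t0\<close>-factor.\<close>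
  define N where "N = 2 * n + 1"
  define T' where "T' = T - {t0}"
  define \<theta> where "\<theta> = root_angle N"
  define \<psi> where "\<psi> J = \<xi> - (\<Sum>t\<in>T'. \<theta> (J t))" for J
  define E where "E = exp (- (19/48) * real (n - 2 * p) / real (card T))"
  define X where "X J = (\<Prod>t\<in>T'. binomial_cf n (\<theta> (J t)) * cis (- (of_int (a t) * \<theta> (J t)))) *
      (cis (- (of_int (a t0) * \<psi> J)) * binomial_cf n (\<psi> J))" for J
  let ?J = "PiE T' (\<lambda>_. {..<N})"
  have "0 < N" by (simp add: N_def)
  have "finite T'" and card_T': "card T' = card T - 1"
    using T by (simp_all add: T'_def)
  have norm_X: "norm (X J) \<le> E * (\<Prod>t\<in>T'. \<bar>cos (\<theta> (J t) / 2)\<bar> ^ (2 * p))" for J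
  proof -
    have "norm (X J) = norm (binomial_cf n (\<psi> J) * (\<Prod>t\<in>T'. binomial_cf n (\<theta> (J t))))"
      unfolding X_def by (simp add: norm_mult prod_norm [symmetric])
    also have "\<dots> \<le> E * (\<Prod>t\<in>T'. \<bar>cos (\<theta> (J t) / 2)\<bar> ^ (2 * p))"
      unfolding \<psi>_def E_def T'_def by (rule norm_binomial_cf_prod_le[OF T \<xi> \<open>2 * p \<le> n\<close>])
    finally show ?thesis .
  qed
  have "p < N"
    using \<open>2 * p \<le> n\<close> by (simp add: N_def)
  have parseval: "(\<Sum>J\<in>?J. \<Prod>t\<in>T'. \<bar>cos (\<theta> (J t) / 2)\<bar> ^ (2 * p))
      = real N ^ card T' * bin (2 * p) (1/2) (int p) ^ card T'"
    using sum_PiE_prod_abs_cos_power_roots[OF \<open>finite T'\<close> \<open>p < N\<close>]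
    by (simp add: \<theta>_def power_mult_distrib)
  have range: "\<bar>a t - a t0\<bar> + int n < int N" if "t \<in> T" for t
    using shifts[OF that] by (simp add: N_def)
  have "(\<Sum>r\<in>{- a t0..int n - a t0}. cis (\<xi> * of_int r) * of_real (\<Prod>t\<in>T. bin n (1/2) (r + a t)))
      = (\<Sum>J\<in>?J. X J) / of_nat N ^ card T'"
    using twisted_sum_prod_bin_eq[where a = a and n = n and N = N and \<xi> = \<xi>, OF T range]
    unfolding X_def \<psi>_def \<theta>_def T'_def .
  then have "norm (\<Sum>r\<in>{- a t0..int n - a t0}. cis (\<xi> * of_int r) * of_real (\<Prod>t\<in>T. bin n (1/2) (r + a t)))
      = norm (\<Sum>J\<in>?J. X J) / real N ^ card T'"
    by (simp add: norm_divide norm_power)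
  also have "\<dots> \<le> (\<Sum>J\<in>?J. E * (\<Prod>t\<in>T'. \<bar>cos (\<theta> (J t) / 2)\<bar> ^ (2 * p))) / real N ^ card T'"
    by (intro divide_right_mono order.trans[OF norm_sum sum_mono] norm_X) simp
  also have "\<dots> = E * bin (2 * p) (1/2) (int p) ^ (card T - 1)"
    using \<open>0 < N\<close> by (simp add: parseval card_T' flip: sum_distrib_left)
  finally show ?thesis unfolding E_def .
qed

section \<open>Numerical estimates\<close>

lemma alpha_le_sqrt_div_39:
  fixes n :: nat and \<alpha> :: real
  assumes "\<alpha> \<le> sqrt n / (4 * exp 2 * sqrt (2 * pi))"
  shows "\<alpha> \<le> sqrt n / 39"
proof -
  have "(2::real) \<le> exp 1"
    using exp_ge_add_one_self[of 1] by simp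
  then have "(4::real) \<le> exp 1 * exp 1"
    using mult_mono[of 2 "exp 1" 2 "exp (1::real)"] by simp
  also have "exp 1 * exp 1 = exp (2::real)"
    by (simp flip: exp_add)
  finally have "(4::real) \<le> exp 2" .
  moreover have "2.44 \<le> sqrt (2 * pi)"
    using pi_gt3 by (intro real_le_rsqrt) (simp add: power2_eq_square)
  ultimately have "4 * 4 * 2.44 \<le> 4 * exp 2 * sqrt (2 * pi)"
    by (intro mult_mono) auto
  then have "sqrt n / (4 * exp 2 * sqrt (2 * pi)) \<le> sqrt n / 39"
    by (intro divide_left_mono) auto
  with assms show ?thesis by linarith
qed

lemma exp_decay_estimate:
  fixes s :: real and M :: nat
  assumes "0 < s" "1 \<le> M"
  shows "s / 39 * (4 / 39) ^ (M - 1) * exp (- (19/96) * s ^ 2 / M) \<le> exp (- s)"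
proof -
  have "exp (2::real) = exp 1 * exp 1"
    by (simp flip: exp_add)
  also have "\<dots> \<le> 3 * 3"
    using exp_le by (intro mult_mono) auto
  finally have e2: "exp (2::real) \<le> 9" by simp
  have geometric: "(4 / 39 :: real) ^ (M - 1) \<le> exp (- 2 * real (M - 1))"
  proof -
    have "(4 / 39 :: real) \<le> exp (-2)"
      using e2 by (simp add: exp_minus field_simps)
    then have "(4 / 39 :: real) ^ (M - 1) \<le> exp (-2) ^ (M - 1)"
      by (rule power_mono) simp
    then show ?thesis by (simp add: mult.commute flip: exp_of_nat_mult)
  qed
  have am_gm: "5/4 * s \<le> 2 * M + (19/96) * s ^ 2 / M"
  proof -
    \<comment> \<open>AM-GM gives \<open>2 sqrt (2 * 19/96) s\<close>, slightly more than \<open>5/4 s\<close>\<close>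
    have "0 \<le> 2 * (M - 5/16 * s) ^ 2 + (19/96 - 25/128) * s ^ 2" by simp
    then have "5/4 * s * M \<le> 2 * M * M + (19/96) * s ^ 2" by (simp add: power2_eq_square algebra_simps)
    then show ?thesis using assms by (simp add: field_simps power2_eq_square)
  qed
  have linear: "s / 39 * exp 2 \<le> exp (s / 4)"
  proof -
    have "s / 39 * exp 2 \<le> s / 39 * 9"
      using e2 assms by (intro mult_left_mono) auto
    also have "\<dots> \<le> 1 + s / 4"
      using assms by simp
    also have "\<dots> \<le> exp (s / 4)"
      by (rule exp_ge_add_one_self)
    finally show ?thesis .
  qed
  have "s / 39 * (4 / 39) ^ (M - 1) * exp (- (19/96) * s ^ 2 / M)
      \<le> s / 39 * (exp (- 2 * real (M - 1)) * exp (- (19/96) * s ^ 2 / M))"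
    using geometric assms by (simp add: mult.assoc)
  also have "\<dots> = s / 39 * exp 2 * exp (- (2 * M + (19/96) * s ^ 2 / M))"
    using assms by (simp add: of_nat_diff algebra_simps flip: exp_add)
  also have "\<dots> \<le> exp (s / 4) * exp (- (5/4) * s)"
    using am_gm linear assms by (intro mult_mono) auto
  also have "\<dots> = exp (- s)"
    by (simp flip: exp_add)
  finally show ?thesis .
qed

lemma alpha_power_term_le:
  fixes n M :: nat and \<alpha> :: real
  assumes "odd n" "0 < \<alpha>" "\<alpha> \<le> sqrt n / 39" "1 \<le> M"
  defines "p \<equiv> n div 4"
  shows "\<alpha> ^ M * (exp (- (19/48) * real (n - 2 * p) / real M) * bin (2 * p) (1/2) (int p) ^ (M - 1))
    \<le> 2 * exp (- sqrt n) * (1/2) ^ M"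
proof -
  define s where "s = sqrt n"
  define \<Gamma> where "\<Gamma> = bin (2 * p) (1/2) (int p)"
  have "0 < n" using \<open>odd n\<close> by (simp add: odd_pos)
  then have "0 < s" by (simp add: s_def)
  have "0 \<le> \<Gamma>" by (simp add: \<Gamma>_def bin_half_nonneg)
  have "n \<le> 4 * (2 * p + 1)"
    unfolding p_def by presburger
  then have "real n \<le> 2 ^ 2 * (2 * real p + 1)"
    using of_nat_le_iff[of n "4 * (2 * p + 1)"] by simp
  then have "\<Gamma> * s \<le> 2"
    unfolding \<Gamma>_def s_def by (rule bin_central_mult_sqrt_le) simp
  have "\<alpha> * \<Gamma> \<le> s / 39 * \<Gamma>"
    using assms(3) \<open>0 \<le> \<Gamma>\<close> by (intro mult_right_mono) (simp_all add: s_def)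
  also have "\<dots> \<le> 4 / 39 * (1/2)"
    using \<open>\<Gamma> * s \<le> 2\<close> by (simp add: mult.commute)
  finally have \<alpha>\<Gamma>: "\<alpha> * \<Gamma> \<le> 4 / 39 * (1/2)" .
  have "\<alpha> ^ M * \<Gamma> ^ (M - 1) = \<alpha> * (\<alpha> * \<Gamma>) ^ (M - 1)"
    using \<open>1 \<le> M\<close> by (cases M) (simp_all add: power_mult_distrib)
  also have "\<dots> \<le> s / 39 * (4 / 39 * (1/2)) ^ (M - 1)"
    using assms(2,3) \<open>0 \<le> \<Gamma>\<close>
    by (intro mult_mono power_mono[OF \<alpha>\<Gamma>]) (simp_all add: s_def)
  finally have front: "\<alpha> ^ M * \<Gamma> ^ (M - 1) \<le> s / 39 * (4 / 39 * (1/2)) ^ (M - 1)" .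
  have "real n / 2 \<le> real (n - 2 * p)"
    unfolding p_def by linarith
  then have "(19/96) * s ^ 2 \<le> (19/48) * real (n - 2 * p)"
    by (simp add: s_def)
  then have "(19/96) * s ^ 2 / M \<le> (19/48) * real (n - 2 * p) / M"
    by (rule divide_right_mono) simp
  then have decay: "exp (- (19/48) * real (n - 2 * p) / real M) \<le> exp (- (19/96) * s ^ 2 / M)"
    by simp
  have "\<alpha> ^ M * (exp (- (19/48) * real (n - 2 * p) / real M) * \<Gamma> ^ (M - 1))
      = (\<alpha> ^ M * \<Gamma> ^ (M - 1)) * exp (- (19/48) * real (n - 2 * p) / real M)"
    by (simp add: mult_ac)
  also have "\<dots> \<le> (s / 39 * (4 / 39 * (1/2)) ^ (M - 1)) * exp (- (19/96) * s ^ 2 / M)"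
    using \<open>0 < s\<close> by (intro mult_mono[OF front decay]) simp_all
  also have "\<dots> = s / 39 * (4 / 39) ^ (M - 1) * exp (- (19/96) * s ^ 2 / M) * (1/2) ^ (M - 1)"
    unfolding power_mult_distrib by (simp only: ac_simps)
  also have "\<dots> \<le> exp (- s) * (1/2) ^ (M - 1)"
    using exp_decay_estimate[OF \<open>0 < s\<close> \<open>1 \<le> M\<close>] by (simp add: mult_right_mono)
  also have "\<dots> = 2 * exp (- s) * (1/2) ^ M"
    using \<open>1 \<le> M\<close> by (cases M) auto
  finally show ?thesis by (simp add: s_def \<Gamma>_def)
qed

lemma alpha_bin_le_half:
  fixes n :: nat and \<alpha> :: real
  assumes "odd n" "0 \<le> \<alpha>" "\<alpha> \<le> sqrt n / 39"
  shows "\<alpha> * bin n (1/2) m \<le> 1/2"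
proof -
  obtain q where n: "n = 2 * q + 1" using \<open>odd n\<close> by (auto elim: oddE)
  define \<Gamma> where "\<Gamma> = bin (2 * q) (1/2) (int q)"
  have "0 \<le> \<Gamma>" by (simp add: \<Gamma>_def bin_half_nonneg)
  have "\<Gamma> * sqrt n \<le> 1"
    unfolding \<Gamma>_def by (rule bin_central_mult_sqrt_le) (simp_all add: n)
  have "\<alpha> * bin n (1/2) m \<le> sqrt n / 39 * \<Gamma>"
    using assms bin_half_odd_le_central[of q m]
    by (intro mult_mono) (simp_all add: \<Gamma>_def n bin_half_nonneg)
  also have "\<dots> \<le> 1 / 39"
    using \<open>\<Gamma> * sqrt n \<le> 1\<close> by (simp add: mult.commute)
  finally show ?thesis by simp
qed

lemma norm_twisted_sum_prod_power_le:
  fixes J :: "'j set" and b :: "'j \<Rightarrow> int" and \<pi> :: "'j \<Rightarrow> nat"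
  assumes J: "finite J" "j0 \<in> J" "1 \<le> \<pi> j0" and shifts: "\<And>j. j \<in> J \<Longrightarrow> \<bar>b j - b j0\<bar> \<le> int n"
    and \<xi>: "2 \<le> \<bar>\<xi>\<bar>" "\<bar>\<xi>\<bar> \<le> pi" and \<alpha>: "odd n" "0 < \<alpha>" "\<alpha> \<le> sqrt n / 39"
  shows "norm (\<Sum>r\<in>{- b j0..int n - b j0}.
      cis (\<xi> * of_int r) * (\<Prod>j\<in>J. of_real (\<alpha> * bin n (1/2) (r + b j)) ^ \<pi> j))
    \<le> 2 * exp (- sqrt n) * (1/2) ^ (\<Sum>j\<in>J. \<pi> j)"
proof -
  define T where "T = Sigma J (\<lambda>j. {..<\<pi> j})"
  define M where "M = (\<Sum>j\<in>J. \<pi> j)"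
  define p where "p = n div 4"
  let ?a = "\<lambda>t. b (fst t)" and ?t0 = "(j0, 0::nat)"
  have "finite T" "?t0 \<in> T" "card T = M"
    using J by (simp_all add: T_def M_def)
  have shifts': "\<bar>?a t - ?a ?t0\<bar> \<le> int n" if "t \<in> T" for t
    using shifts that by (auto simp: T_def)
  have "2 * p \<le> n"
    by (simp add: p_def)
  have "1 \<le> M"
    using J member_le_sum[of j0 J \<pi>] by (simp add: M_def)
  have regroup: "(\<Prod>j\<in>J. of_real (\<alpha> * bin n (1/2) (r + b j)) ^ \<pi> j)
      = of_real (\<alpha> ^ M) * (of_real (\<Prod>t\<in>T. bin n (1/2) (r + ?a t)) :: complex)" for r
  proof -
    have "(\<Prod>t\<in>T. bin n (1/2) (r + ?a t)) = (\<Prod>j\<in>J. \<Prod>i<\<pi> j. bin n (1/2) (r + b j))"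
      unfolding T_def using J by (subst prod.Sigma) (auto simp: case_prod_unfold)
    also have "\<dots> = (\<Prod>j\<in>J. bin n (1/2) (r + b j) ^ \<pi> j)"
      by simp
    finally have "(\<Prod>t\<in>T. bin n (1/2) (r + ?a t)) = (\<Prod>j\<in>J. bin n (1/2) (r + b j) ^ \<pi> j)" .
    then show ?thesis
      by (simp add: M_def power_mult_distrib prod.distrib power_sum of_real_prod)
  qed
  have "(\<Sum>r\<in>{- b j0..int n - b j0}. cis (\<xi> * of_int r) * (\<Prod>j\<in>J. of_real (\<alpha> * bin n (1/2) (r + b j)) ^ \<pi> j))
      = of_real (\<alpha> ^ M) *
        (\<Sum>r\<in>{- b j0..int n - b j0}. cis (\<xi> * of_int r) * of_real (\<Prod>t\<in>T. bin n (1/2) (r + ?a t)))"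
    unfolding regroup sum_distrib_left by (simp only: ac_simps)
  then have "norm (\<Sum>r\<in>{- b j0..int n - b j0}.
        cis (\<xi> * of_int r) * (\<Prod>j\<in>J. of_real (\<alpha> * bin n (1/2) (r + b j)) ^ \<pi> j))
      = \<alpha> ^ M * norm (\<Sum>r\<in>{- ?a ?t0..int n - ?a ?t0}. cis (\<xi> * of_int r) * of_real (\<Prod>t\<in>T. bin n (1/2) (r + ?a t)))"
    using \<alpha> by (simp add: norm_mult norm_power)
  also have "\<dots> \<le> \<alpha> ^ M * (exp (- (19/48) * real (n - 2 * p) / real M) * bin (2 * p) (1/2) (int p) ^ (M - 1))"
    using norm_twisted_sum_prod_bin_le[where a = ?a and n = n,
        OF \<open>finite T\<close> \<open>?t0 \<in> T\<close> shifts' \<xi> \<open>2 * p \<le> n\<close>] \<alpha>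
    unfolding \<open>card T = M\<close> by (intro mult_left_mono) auto
  also have "\<dots> \<le> 2 * exp (- sqrt n) * (1/2) ^ M"
    unfolding p_def using alpha_power_term_le[OF \<alpha> \<open>1 \<le> M\<close>] .
  finally show ?thesis unfolding M_def .
qed

section \<open>Geometric expansion and the main theorem\<close>

lemma has_sum_sum:
  fixes f :: "'i \<Rightarrow> 'a \<Rightarrow> 'b::topological_comm_monoid_add"
  assumes "finite I" "\<And>i. i \<in> I \<Longrightarrow> (f i has_sum s i) A"
  shows "((\<lambda>x. \<Sum>i\<in>I. f i x) has_sum (\<Sum>i\<in>I. s i)) A"
  using assms by (induction I rule: finite_induct) (auto intro!: has_sum_add)

lemma has_sum_prod_geometric:
  fixes z :: "'j \<Rightarrow> 'a::{real_normed_field, banach}"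
  assumes "finite J" and z: "\<And>j. j \<in> J \<Longrightarrow> norm (z j) \<le> 1/2"
  shows "((\<lambda>\<pi>. \<Prod>j\<in>J. z j ^ \<pi> j) has_sum (\<Prod>j\<in>J. z j / (1 - z j))) (PiE J (\<lambda>_. {1..}))"
proof -
  define H where "H \<pi> = (\<Prod>j\<in>J. (1/2::real) ^ \<pi> j)" for \<pi>
  have "((\<lambda>p. (1/2::real) ^ p) has_sum 1) {1..}"
    using has_sum_geometric_from_1[of "1/2::real"] by simp
  then have "infsum H (PiE J (\<lambda>_. {1..})) = 1"
    unfolding H_def using \<open>finite J\<close> by (subst infsum_prod_PiE_abs) (auto simp: has_sum_iff)
  \<comment> \<open>a nonzero value of \<open>infsum\<close> already implies summability\<close>
  then have "H summable_on PiE J (\<lambda>_. {1..})"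
    using infsum_not_exists by fastforce
  moreover have "norm (\<Prod>j\<in>J. z j ^ \<pi> j) \<le> H \<pi>" for \<pi>
    unfolding H_def prod_norm [symmetric] norm_power using z by (intro prod_mono) (auto intro: power_mono)
  ultimately have "(\<lambda>\<pi>. norm (\<Prod>j\<in>J. z j ^ \<pi> j)) summable_on PiE J (\<lambda>_. {1..})"
    by (rule summable_on_comparison_test) simp_all
  then have "(\<lambda>\<pi>. \<Prod>j\<in>J. z j ^ \<pi> j) summable_on PiE J (\<lambda>_. {1..})"
    by (rule abs_summable_summable)
  moreover have "infsum (\<lambda>\<pi>. \<Prod>j\<in>J. z j ^ \<pi> j) (PiE J (\<lambda>_. {1..})) = (\<Prod>j\<in>J. z j / (1 - z j))"
  proof -
    have geometric: "((\<lambda>p. z j ^ p) has_sum z j / (1 - z j)) {1..}"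
      and "(\<lambda>p. norm (z j ^ p)) summable_on {1..}" if "j \<in> J" for j
      using has_sum_geometric_from_1[of "z j"] has_sum_geometric_from_1[of "norm (z j)"] z[OF that]
      by (auto simp: norm_power has_sum_iff)
    then have "infsum (\<lambda>\<pi>. \<Prod>j\<in>J. z j ^ \<pi> j) (PiE J (\<lambda>_. {1..})) = (\<Prod>j\<in>J. infsum (\<lambda>p. z j ^ p) {1..})"
      using \<open>finite J\<close> by (intro infsum_prod_PiE_abs) auto
    also have "\<dots> = (\<Prod>j\<in>J. z j / (1 - z j))"
      using geometric by (intro prod.cong) (auto simp: has_sum_iff)
    finally show ?thesis .
  qed
  ultimately show ?thesis
    by (simp add: has_sum_iff)
qed

lemma norm_sum_prod_geometric_le:
  fixes w :: "'r \<Rightarrow> complex" and y :: "'j \<Rightarrow> 'r \<Rightarrow> real" and B :: real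
  assumes "finite J" "finite R"
    and y: "\<And>j r. 0 \<le> y j r \<and> y j r \<le> 1/2"
    and bound: "\<And>\<pi>. \<pi> \<in> PiE J (\<lambda>_. {1..}) \<Longrightarrow>
      norm (\<Sum>r\<in>R. w r * (\<Prod>j\<in>J. of_real (y j r) ^ \<pi> j)) \<le> B * (1/2) ^ (\<Sum>j\<in>J. \<pi> j)"
  shows "norm (\<Sum>r\<in>R. w r * of_real (\<Prod>j\<in>J. y j r / (1 - y j r))) \<le> B"
proof -
  have "((\<lambda>\<pi>. \<Sum>r\<in>R. w r * (\<Prod>j\<in>J. of_real (y j r) ^ \<pi> j))
      has_sum (\<Sum>r\<in>R. w r * of_real (\<Prod>j\<in>J. y j r / (1 - y j r)))) (PiE J (\<lambda>_. {1..}))"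
    using \<open>finite R\<close>
  proof (rule has_sum_sum)
    fix r
    have "((\<lambda>\<pi>. \<Prod>j\<in>J. of_real (y j r) ^ \<pi> j)
        has_sum (\<Prod>j\<in>J. of_real (y j r) / (1 - of_real (y j r)) :: complex)) (PiE J (\<lambda>_. {1..}))"
      using has_sum_prod_geometric[OF \<open>finite J\<close>, of "\<lambda>j. of_real (y j r)"] y by simp
    then show "((\<lambda>\<pi>. w r * (\<Prod>j\<in>J. of_real (y j r) ^ \<pi> j))
        has_sum w r * of_real (\<Prod>j\<in>J. y j r / (1 - y j r)))
        (PiE J (\<lambda>_. {1..}))"
      by (simp add: has_sum_cmult_right)
  qed
  moreover have "((\<lambda>\<pi>. B * (\<Prod>j\<in>J. (1/2) ^ \<pi> j)) has_sum B * 1) (PiE J (\<lambda>_. {1..}))"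
    using has_sum_prod_geometric[OF \<open>finite J\<close>, of "\<lambda>_. 1/2 :: real"] by (intro has_sum_cmult_right) simp
  ultimately have "norm (\<Sum>r\<in>R. w r * of_real (\<Prod>j\<in>J. y j r / (1 - y j r))) \<le> B * 1"
    by (rule norm_infsum_le) (simp add: bound flip: power_sum)
  then show ?thesis by simp
qed

theorem lemma2:
  fixes n k :: nat and \<alpha> \<xi> :: real and l :: "nat \<Rightarrow> int"
  assumes "odd n"
    and "0 < \<alpha>" and "\<alpha> \<le> sqrt n / (4 * exp 2 * sqrt (2 * pi))"
    and "k \<ge> 1"
    and "inj_on l {1..k}"
    and "\<And>j. j \<in> {1..k} \<Longrightarrow> 1 \<le> l j \<and> l j \<le> int (n div 2)"
    and "-pi \<le> \<xi>" and "\<xi> \<le> pi" and "\<bar>\<xi>\<bar> \<ge> 2"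
  shows "cmod (\<Sum>\<^sub>\<infinity>r::int. exp (\<i> * complex_of_real (\<xi> * of_int r)) *
            complex_of_real (\<Prod>j=1..k.
              \<alpha> * bin n (1/2) (r + int (n div 4) + l j) /
              (1 - \<alpha> * bin n (1/2) (r + int (n div 4) + l j))))
         \<le> 2 * exp (- sqrt n)"
proof -
  define b where "b j = int (n div 4) + l j" for j
  define y where "y j r = \<alpha> * bin n (1/2) (r + b j)" for j r
  define R where "R = {- b 1..int n - b 1}"
  have "1 \<in> {1..k}" using \<open>k \<ge> 1\<close> by simp
  have \<alpha>: "\<alpha> \<le> sqrt n / 39" using assms(3) by (rule alpha_le_sqrt_div_39)
  have \<xi>: "2 \<le> \<bar>\<xi>\<bar>" "\<bar>\<xi>\<bar> \<le> pi" using assms(7-9) by auto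
  let ?F = "\<lambda>r. cis (\<xi> * of_int r) * of_real (\<Prod>j\<in>{1..k}. y j r / (1 - y j r))"
  have "y 1 r = 0" if "r \<notin> R" for r
    using that by (auto simp: R_def y_def bin_half)
  then have "?F r = 0" if "r \<notin> R" for r
    using that \<open>1 \<in> {1..k}\<close> by (auto intro!: prod_zero bexI[of _ 1])
  then have "(\<Sum>\<^sub>\<infinity>r::int. ?F r) = (\<Sum>\<^sub>\<infinity>r\<in>R. ?F r)"
    by (intro infsum_cong_neutral) auto
  also have "\<dots> = (\<Sum>r\<in>R. ?F r)"
    by (simp add: R_def)
  also have "norm \<dots> \<le> 2 * exp (- sqrt n)"
  proof (rule norm_sum_prod_geometric_le)
    show "0 \<le> y j r \<and> y j r \<le> 1/2" for j r
      using alpha_bin_le_half[OF assms(1) less_imp_le[OF assms(2)] \<alpha>] assms(2)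
      by (simp add: y_def bin_half_nonneg)
    fix \<pi> :: "nat \<Rightarrow> nat" assume "\<pi> \<in> PiE {1..k} (\<lambda>_. {1..})"
    then have "1 \<le> \<pi> 1" using \<open>1 \<in> {1..k}\<close> by auto
    moreover have "\<bar>b j - b 1\<bar> \<le> int n" if "j \<in> {1..k}" for j
      using assms(6)[OF that] assms(6)[OF \<open>1 \<in> {1..k}\<close>] by (simp add: b_def) linarith
    ultimately show "norm (\<Sum>r\<in>R. cis (\<xi> * of_int r) * (\<Prod>j\<in>{1..k}. of_real (y j r) ^ \<pi> j))
        \<le> 2 * exp (- sqrt n) * (1/2) ^ (\<Sum>j\<in>{1..k}. \<pi> j)"
      unfolding R_def y_def
      using norm_twisted_sum_prod_power_le[OF _ \<open>1 \<in> {1..k}\<close> _ _ \<xi> assms(1,2) \<alpha>] by simp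
  qed (simp_all add: R_def)
  finally show ?thesis
    by (simp add: cis_conv_exp y_def b_def add.assoc)
qed

end
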